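(* The family $\mathfrak{F}^*=\{\tilde{\omega},\tilde{\omega^*}\}\cup\{\tilde{L}_n:n\geq 2\}$ is not $E_3$-learnable.
   Context: Partial orders are structures in the language $\{\leq\}$. $\omega$ and $\omega^*$ are the linear orders of the natural numbers and of the negative integers; $L_n$ is the finite linear order with $n$ elements. For a partial order $L$, $\tilde{L}$ is $L$ together with infinitely many new elements that are pairwise incomparable and incomparable to the elements of $L$ (presented with domain $\mathbb{N}$). All structures have domain $\mathbb{N}$ and are identified with their atomic diagrams (elements of $2^{\mathbb{N}}$). For a family $\mathfrak{K}$, $\mathrm{LD}(\mathfrak{K})\subseteq 2^{\mathbb{N}}$ is the set of structures with domain $\mathbb{N}$ isomorphic to a member of $\mathfrak{K}$ (subspace topology). For an equivalence relation $E$ on a space $X$, $\mathfrak{K}$ is $E$-learnable if there is a continuous $\Gamma:\mathrm{LD}(\mathfrak{K})\to X$ with $\mathcal{S}\cong\mathcal{S}'\iff\Gamma(\mathcal{S})E\Gamma(\mathcal{S}')$ for all $\mathcal{S},\mathcal{S}'\in\mathrm{LD}(\mathfrak{K})$. Fix a computable bijection $\langle\cdot,\cdot\rangle:\mathbb{N}^2\to\mathbb{N}$; for $p\in\mathbb{N}^{\mathbb{N}\times\mathbb{N}}$ let $p^{[m]}(n)=p(\langle m,n\rangle)$; $E_0$ on $\mathbb{N}^{\mathbb{N}}$: $p\,E_0\,q\iff\exists m\forall n\ge m\ p(n)=q(n)$; $E_3$ on $\mathbb{N}^{\mathbb{N}\times\mathbb{N}}$: $p\,E_3\,q\iff\forall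 m\ p^{[m]}E_0q^{[m]}$. *)

theory Defs
  imports "HOL-Analysis.Analysis"
begin

(* A {<=}-structure with domain nat is a binary relation on nat. *)
type_synonym struct = "nat \<Rightarrow> nat \<Rightarrow> bool"

(* Atomic diagram in 2^N, via the computable bijection prod_decode : nat -> nat x nat. *)
definition diag :: "struct \<Rightarrow> (nat \<Rightarrow> bool)" where
  "diag S = (\<lambda>k. S (fst (prod_decode k)) (snd (prod_decode k)))"

definition iso_to :: "struct \<Rightarrow> 'a set \<Rightarrow> ('a \<Rightarrow> 'a \<Rightarrow> bool) \<Rightarrow> bool" where
  "iso_to S A R \<longleftrightarrow> (\<exists>f. bij_betw f UNIV A \<and> (\<forall>x y. S x y \<longleftrightarrow> R (f x) (f y)))"

definition struct_iso :: "struct \<Rightarrow> struct \<Rightarrow> bool" where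
  "struct_iso S S' \<longleftrightarrow> iso_to S UNIV S'"

(* L~ : L plus infinitely many new pairwise incomparable elements, incomparable to L. *)
fun tilde_rel :: "('a \<Rightarrow> 'a \<Rightarrow> bool) \<Rightarrow> 'a + nat \<Rightarrow> 'a + nat \<Rightarrow> bool" where
  "tilde_rel R (Inl a) (Inl b) = R a b"
| "tilde_rel R (Inr n) (Inr m) = (n = m)"
| "tilde_rel R _ _ = False"

definition tilde_carrier :: "'a set \<Rightarrow> ('a + nat) set" where
  "tilde_carrier A = Inl ` A \<union> range Inr"

definition LD_Fstar :: "struct set" where
  "LD_Fstar =
     {S. iso_to S (tilde_carrier (UNIV :: nat set)) (tilde_rel (\<le>))}
   \<union> {S. iso_to S (tilde_carrier {x :: int. x < 0}) (tilde_rel (\<le>))}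
   \<union> {S. \<exists>n::nat. n \<ge> 2 \<and> iso_to S (tilde_carrier {..<n}) (tilde_rel (\<le>))}"

definition E0 :: "(nat \<Rightarrow> nat) \<Rightarrow> (nat \<Rightarrow> nat) \<Rightarrow> bool" where
  "E0 p q \<longleftrightarrow> (\<exists>m. \<forall>n\<ge>m. p n = q n)"

definition column :: "(nat \<Rightarrow> nat) \<Rightarrow> nat \<Rightarrow> (nat \<Rightarrow> nat)" where
  "column p m = (\<lambda>n. p (prod_encode (m, n)))"

definition E3 :: "(nat \<Rightarrow> nat) \<Rightarrow> (nat \<Rightarrow> nat) \<Rightarrow> bool" where
  "E3 p q \<longleftrightarrow> (\<forall>m. E0 (column p m) (column q m))"

(* E3-learnability of a family given by its LD set (of structures);
   the space LD is the image under diag, with the subspace topology of 2^N (product topology). *)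
definition E3_learnable :: "struct set \<Rightarrow> bool" where
  "E3_learnable LD \<longleftrightarrow>
     (\<exists>\<Gamma> :: (nat \<Rightarrow> bool) \<Rightarrow> (nat \<Rightarrow> nat).
        continuous_on (diag ` LD) \<Gamma> \<and>
        (\<forall>S\<in>LD. \<forall>S'\<in>LD. struct_iso S S' \<longleftrightarrow> E3 (\<Gamma> (diag S)) (\<Gamma> (diag S'))))"

end

theory Submission
  imports Defs
begin

text \<open>Suppose \<open>\<Gamma>\<close> learns the family. Since \<open>\<omega>\<close> and \<open>\<omega>\<^sup>*\<close> (plus isolated points) are not
  isomorphic, some column \<open>m\<close> of \<open>\<Gamma>\<close> separates them up to \<open>E\<^sub>0\<close>. For each orientation, the
  \<open>m\<close>-th column on long finite chains must eventually be \<open>E\<^sub>0\<close>-equivalent to the one on the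
  infinite chain: otherwise continuity of \<open>\<Gamma>\<close> allows a finite-extension construction of an
  infinite, coinfinite chain whose \<open>m\<close>-th column disagrees with it infinitely often, although
  the two structures are isomorphic. As the increasing and decreasing finite chains of equal
  length are isomorphic, \<open>\<omega>\<close> and \<open>\<omega>\<^sup>*\<close> would get \<open>E\<^sub>0\<close>-equivalent \<open>m\<close>-th columns.\<close>

lemma continuous_on_coordinate_locally_constant:
  fixes \<Gamma> :: "(nat \<Rightarrow> 'a::topological_space) \<Rightarrow> 'i \<Rightarrow> 'b::discrete_topology"
  assumes "continuous_on X \<Gamma>" "x \<in> X"
  shows "\<exists>N. \<forall>y\<in>X. (\<forall>k<N. y k = x k) \<longrightarrow> \<Gamma> y j = \<Gamma> x j"
proof -
  have "continuous_on X (\<lambda>y. \<Gamma> y j)"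
    using assms(1) by (rule continuous_on_product_then_coordinatewise)
  then obtain U where U: "open U" "U \<inter> X = (\<lambda>y. \<Gamma> y j) -` {\<Gamma> x j} \<inter> X"
    using continuous_on_open_invariant open_discrete by metis
  then have "openin (product_topology (\<lambda>_. euclidean) UNIV) U" "x \<in> U"
    using assms(2) by (auto simp: open_fun_def)
  from product_topology_open_contains_basis[OF this]
  obtain V where V: "x \<in> (\<Pi>\<^sub>E i\<in>UNIV. V i)" "finite {i. V i \<noteq> UNIV}" "(\<Pi>\<^sub>E i\<in>UNIV. V i) \<subseteq> U"
    unfolding topspace_euclidean by blast
  obtain N where N: "{i. V i \<noteq> UNIV} \<subseteq> {..<N}"
    using finite_nat_bounded[OF V(2)] by blast
  have "y \<in> U" if "\<forall>k<N. y k = x k" for y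
  proof -
    have "y i \<in> V i" for i
      using V(1) N that by (cases "i < N") auto
    then show ?thesis using V(3) by auto
  qed
  then show ?thesis using U(2) by blast
qed

lemma diag_eq_below:
  assumes "\<forall>x<N. \<forall>y<N. S x y = S' x y"
  shows "\<forall>k<N. diag S k = diag S' k"
proof (intro allI impI)
  fix k assume "k < N"
  moreover obtain x y where xy: "prod_decode k = (x, y)" by fastforce
  moreover have "x \<le> k" "y \<le> k"
    using le_prod_encode_1 le_prod_encode_2 xy by (metis prod_decode_inverse)+
  ultimately show "diag S k = diag S' k" using assms by (simp add: diag_def)
qed

lemma iso_toI:
  assumes "bij_betw g A UNIV" and "\<forall>a\<in>A. \<forall>c\<in>A. S (g a) (g c) = R a c"
  shows "iso_to S A R"
  unfolding iso_to_def
proof (intro exI conjI allI)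
  show "bij_betw (inv_into A g) UNIV A" using assms(1) by (rule bij_betw_inv_into)
  fix x y
  have "x \<in> g ` A" "y \<in> g ` A" using assms(1) by (auto simp: bij_betw_def)
  then show "S x y = R (inv_into A g x) (inv_into A g y)"
    using assms(2) by (metis inv_into_into f_inv_into_f)
qed

lemma struct_iso_if_iso_to:
  assumes "iso_to S A R" and "iso_to S' A R"
  shows "struct_iso S S'"
proof -
  obtain f where f: "bij_betw f UNIV A" "\<forall>x y. S x y = R (f x) (f y)"
    using assms(1) unfolding iso_to_def by blast
  obtain g where g: "bij_betw g UNIV A" "\<forall>x y. S' x y = R (g x) (g y)"
    using assms(2) unfolding iso_to_def by blast
  have "bij_betw (inv_into UNIV g \<circ> f) UNIV UNIV"
    using f(1) bij_betw_inv_into[OF g(1)] by (rule bij_betw_trans)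
  moreover have "g (inv_into UNIV g (f x)) = f x" for x
    using f(1) g(1) by (auto simp: bij_betw_def intro: f_inv_into_f)
  ultimately show ?thesis
    unfolding struct_iso_def iso_to_def using f(2) g(2) by (metis comp_apply)
qed

lemma bij_betw_case_sum_tilde_carrier:
  assumes "bij_betw e A C" and "bij_betw e' UNIV (-C)"
  shows "bij_betw (case_sum e e') (tilde_carrier A) UNIV"
proof -
  have "bij_betw (case_sum e e') (Inl ` A) C"
    using assms(1) bij_betw_comp_iff[of Inl A "Inl ` A" "case_sum e e'" C]
    by (simp add: bij_betw_imageI comp_def)
  moreover have "bij_betw (case_sum e e') (range Inr) (-C)"
    using assms(2) bij_betw_comp_iff[of Inr UNIV "range Inr" "case_sum e e'" "-C"]
    by (simp add: bij_betw_imageI comp_def)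
  ultimately show ?thesis
    unfolding tilde_carrier_def using bij_betw_combine[of _ _ C _ "-C"] by fastforce
qed

text \<open>Depending on \<open>C\<close> and \<open>b\<close>, a presentation of \<open>L\<^sub>n\<close>, \<open>\<omega>\<close> or \<open>\<omega>\<^sup>*\<close> plus
  infinitely many isolated points.\<close>
definition chain_struct :: "bool \<Rightarrow> nat set \<Rightarrow> struct" where
  "chain_struct b C x y \<longleftrightarrow> x = y \<or> (x \<in> C \<and> y \<in> C \<and> (if b then x \<le> y else y \<le> x))"

lemma iso_to_chain_struct:
  fixes e :: "'a::order \<Rightarrow> nat"
  assumes e: "bij_betw e A C" and "infinite (-C)"
    and e_ord: "\<forall>i\<in>A. \<forall>i'\<in>A. (if b then e i \<le> e i' else e i' \<le> e i) \<longleftrightarrow> i \<le> i'"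
  shows "iso_to (chain_struct b C) (tilde_carrier A) (tilde_rel (\<le>))"
proof (rule iso_toI)
  let ?e' = "enumerate (-C)"
  have e': "bij_betw ?e' UNIV (-C)" using assms(2) by (rule bij_enumerate)
  then show "bij_betw (case_sum e ?e') (tilde_carrier A) UNIV"
    using e by (intro bij_betw_case_sum_tilde_carrier)
  have eC: "e i \<in> C" if "i \<in> A" for i using e that by (auto simp: bij_betw_def)
  have e'C: "?e' j \<notin> C" "inj ?e'" for j using e' by (auto simp: bij_betw_def)
  show "\<forall>a\<in>tilde_carrier A. \<forall>c\<in>tilde_carrier A.
      chain_struct b C (case_sum e ?e' a) (case_sum e ?e' c) = tilde_rel (\<le>) a c"
  proof (unfold tilde_carrier_def, intro ballI)
    fix a c :: "'a + nat" assume "a \<in> Inl ` A \<union> range Inr" "c \<in> Inl ` A \<union> range Inr"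
    then show "chain_struct b C (case_sum e ?e' a) (case_sum e ?e' c) = tilde_rel (\<le>) a c"
      using eC e'C e_ord by (auto simp: chain_struct_def inj_eq) (metis order_refl)+
  qed
qed

lemma finite_enumerate_mono_le_iff:
  "finite S \<Longrightarrow> m < card S \<Longrightarrow> n < card S \<Longrightarrow> enumerate S m \<le> enumerate S n \<longleftrightarrow> m \<le> n"
  for S :: "'a::wellorder set"
  by (metis finite_enumerate_mono_iff not_le)

lemma iso_to_chain_struct_finite:
  assumes "finite C"
  shows "iso_to (chain_struct b C) (tilde_carrier {..<card C}) (tilde_rel (\<le>))"
proof (rule iso_to_chain_struct)
  let ?n = "card C"
  define flip where "flip i = (if b then i else ?n - 1 - i)" for i
  have "bij_betw flip {..<?n} {..<?n}"
    by (rule bij_betw_byWitness[where f'=flip]) (auto simp: flip_def)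
  then show "bij_betw (enumerate C \<circ> flip) {..<?n} C"
    using finite_bij_enumerate[OF assms] by (rule bij_betw_trans)
  show "infinite (-C)" using assms by simp
  let ?e = "enumerate C \<circ> flip"
  show "\<forall>i\<in>{..<?n}. \<forall>i'\<in>{..<?n}. (if b then ?e i \<le> ?e i' else ?e i' \<le> ?e i) \<longleftrightarrow> i \<le> i'"
    using assms by (auto simp: flip_def finite_enumerate_mono_le_iff)
qed

lemma iso_to_chain_struct_up:
  assumes "infinite C" and "infinite (-C)"
  shows "iso_to (chain_struct True C) (tilde_carrier (UNIV :: nat set)) (tilde_rel (\<le>))"
  using assms by (intro iso_to_chain_struct[where e="enumerate C"] bij_enumerate) auto

lemma iso_to_chain_struct_down:
  assumes "infinite C" and "infinite (-C)"
  shows "iso_to (chain_struct False C) (tilde_carrier {x :: int. x < 0}) (tilde_rel (\<le>))"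
proof (rule iso_to_chain_struct)
  let ?e = "enumerate C \<circ> (\<lambda>i::int. nat (- i - 1))"
  have "bij_betw (\<lambda>i::int. nat (- i - 1)) {x. x < 0} UNIV"
    by (rule bij_betw_byWitness[where f'="\<lambda>k. - int k - 1"]) auto
  then show "bij_betw ?e {x. x < 0} C"
    using bij_enumerate[OF assms(1)] by (rule bij_betw_trans)
  show "\<forall>i\<in>{x. x < 0}. \<forall>i'\<in>{x. x < 0}. (if False then ?e i \<le> ?e i' else ?e i' \<le> ?e i) \<longleftrightarrow> i \<le> i'"
    using assms(1) by auto
qed (fact assms(2))

lemma chain_struct_finite_in_LD_Fstar:
  assumes "finite C" and "2 \<le> card C"
  shows "chain_struct b C \<in> LD_Fstar"
  using iso_to_chain_struct_finite[OF assms(1)] assms(2) unfolding LD_Fstar_def by blast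

lemma chain_struct_infinite_in_LD_Fstar:
  assumes "infinite C" and "infinite (-C)"
  shows "chain_struct b C \<in> LD_Fstar"
  using iso_to_chain_struct_up[OF assms] iso_to_chain_struct_down[OF assms]
  unfolding LD_Fstar_def by (cases b) auto

lemma struct_iso_chain_struct_finite:
  assumes "finite C" and "finite C'" and "card C = card C'"
  shows "struct_iso (chain_struct b C) (chain_struct b' C')"
  using iso_to_chain_struct_finite[OF assms(1)] iso_to_chain_struct_finite[OF assms(2)] assms(3)
  by (metis struct_iso_if_iso_to)

lemma struct_iso_chain_struct_infinite:
  assumes "infinite C" "infinite (-C)" "infinite C'" "infinite (-C')"
  shows "struct_iso (chain_struct b C) (chain_struct b C')"
proof (cases b)
  case True then show ?thesis
    using struct_iso_if_iso_to iso_to_chain_struct_up assms by metis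
next
  case False then show ?thesis
    using struct_iso_if_iso_to iso_to_chain_struct_down assms by metis
qed

text \<open>The least element of an increasing infinite chain lies below infinitely many elements,
  whereas in a decreasing chain every element lies below only finitely many.\<close>
lemma not_struct_iso_chain_struct_up_down:
  assumes "infinite C"
  shows "\<not> struct_iso (chain_struct True C) (chain_struct False C)"
proof
  assume "struct_iso (chain_struct True C) (chain_struct False C)"
  then obtain f where "bij f" and f: "\<And>x y. chain_struct True C x y \<longleftrightarrow> chain_struct False C (f x) (f y)"
    unfolding struct_iso_def iso_to_def by blast
  define c where "c = (LEAST x. x \<in> C)"
  have "C \<noteq> {}" using assms by auto
  then have "C \<subseteq> {y. chain_struct True C c y}"
    unfolding c_def by (auto simp: chain_struct_def intro: LeastI Least_le)
  then have "infinite (f ` {y. chain_struct True C c y})"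
    using assms \<open>bij f\<close> finite_imageD finite_subset by (metis bij_def inj_on_subset subset_UNIV)
  moreover have "f ` {y. chain_struct True C c y} \<subseteq> {..f c}"
    using f by (auto simp: chain_struct_def)
  ultimately show False using finite_subset by blast
qed

lemma E0_sym: "E0 p q \<Longrightarrow> E0 q p"
  unfolding E0_def by metis

lemma E0_trans: "E0 p q \<Longrightarrow> E0 q s \<Longrightarrow> E0 p s"
  unfolding E0_def by (metis max.cobounded1 max.cobounded2 order_trans)

lemma infinite_coinfinite_set_by_extension:
  fixes F :: "nat set \<Rightarrow> nat \<Rightarrow> bool"
  assumes extend: "\<And>D M J. D \<subseteq> {..<M} \<Longrightarrow> \<exists>D' M'. D' \<subseteq> {..<M'} \<and> D' \<inter> {..<M} = D
      \<and> (\<exists>x\<in>D'. M \<le> x) \<and> (\<exists>x\<in>{M..<M'}. x \<notin> D')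
      \<and> (\<exists>j\<ge>J. \<forall>C. C \<inter> {..<M'} = D' \<longrightarrow> infinite C \<longrightarrow> infinite (-C) \<longrightarrow> F C j)"
  shows "\<exists>C. infinite C \<and> infinite (-C) \<and> (\<forall>J. \<exists>j\<ge>J. F C j)"
proof -
  define good where "good n D' M' \<longleftrightarrow>
    (\<exists>j\<ge>n. \<forall>C. C \<inter> {..<M'} = D' \<longrightarrow> infinite C \<longrightarrow> infinite (-C) \<longrightarrow> F C j)" for n D' M'
  define Q where "Q n = (\<lambda>(D, M) (D', M'). D' \<inter> {..<M} = D \<and> (\<exists>x\<in>D'. M \<le> x)
    \<and> (\<exists>x\<in>{M..<M'}. x \<notin> D') \<and> good n D' M')" for n
  have "\<exists>s. \<forall>n. (\<lambda>(D, M). D \<subseteq> {..<M}) (s n) \<and> Q n (s n) (s (Suc n))"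
  proof (rule dependent_nat_choice)
    fix x :: "nat set \<times> nat" and n
    assume "case x of (D, M) \<Rightarrow> D \<subseteq> {..<M}"
    then show "\<exists>y. (case y of (D, M) \<Rightarrow> D \<subseteq> {..<M}) \<and> Q n x y"
      using extend unfolding Q_def good_def by (cases x) fastforce
  qed auto
  then obtain s where s: "\<And>n. fst (s n) \<subseteq> {..<snd (s n)}" and "\<And>n. Q n (s n) (s (Suc n))"
    by (metis case_prod_beta)
  then have step: "fst (s (Suc n)) \<inter> {..<snd (s n)} = fst (s n)
      \<and> (\<exists>x\<in>fst (s (Suc n)). snd (s n) \<le> x) \<and> (\<exists>x\<in>{snd (s n)..<snd (s (Suc n))}. x \<notin> fst (s (Suc n)))
      \<and> good n (fst (s (Suc n))) (snd (s (Suc n)))" for n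
    unfolding Q_def by (simp add: case_prod_beta)
  define D where "D n = fst (s n)" for n
  define M where "M n = snd (s n)" for n
  have "strict_mono M"
    unfolding strict_mono_Suc_iff M_def using step by (meson atLeastLessThan_iff le_less_trans)
  then have M_ge: "n \<le> M n" and M_mono: "M n \<le> M (n + l)" for n l
    by (simp_all add: strict_mono_imp_increasing strict_mono_less_eq)
  have D_stable: "D (n + l) \<inter> {..<M n} = D n" for n l
  proof (induction l)
    case (Suc l)
    have "D (Suc (n + l)) \<inter> {..<M n} = D (Suc (n + l)) \<inter> {..<M (n + l)} \<inter> {..<M n}"
      using M_mono[of n l] by auto
    then show ?case using step[of "n + l"] Suc.IH by (simp add: D_def M_def)
  qed (use s in \<open>auto simp: D_def M_def\<close>)
  define C where "C = (\<Union>n. D n)"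
  have C_below: "C \<inter> {..<M n} = D n" for n
  proof
    show "C \<inter> {..<M n} \<subseteq> D n"
    proof
      fix x assume "x \<in> C \<inter> {..<M n}"
      then obtain l where "x \<in> D l" "x < M n" unfolding C_def by blast
      then have "x \<in> D (n + l)" using D_stable[of l n] by (auto simp: add.commute)
      then show "x \<in> D n" using D_stable[of n l] \<open>x < M n\<close> by blast
    qed
    show "D n \<subseteq> C \<inter> {..<M n}" using s unfolding C_def D_def M_def by blast
  qed
  have "infinite C"
    unfolding infinite_nat_iff_unbounded_le
  proof
    fix n
    obtain x where "x \<in> D (Suc n)" "M n \<le> x" using step[of n] by (auto simp: D_def M_def)
    then show "\<exists>x\<ge>n. x \<in> C" using M_ge[of n] unfolding C_def by (meson UN_I UNIV_I order_trans)
  qed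
  moreover have "infinite (-C)"
    unfolding infinite_nat_iff_unbounded_le
  proof
    fix n
    obtain x where "x \<in> {M n..<M (Suc n)}" "x \<notin> D (Suc n)" using step[of n] by (auto simp: D_def M_def)
    then show "\<exists>x\<ge>n. x \<in> -C" using M_ge[of n] C_below[of "Suc n"] by auto
  qed
  moreover have "\<exists>j\<ge>J. F C j" for J
    using step[of J] C_below[of "Suc J"] \<open>infinite C\<close> \<open>infinite (-C)\<close>
    unfolding good_def D_def M_def by blast
  ultimately show ?thesis by blast
qed

locale E3_learner =
  fixes \<Gamma> :: "(nat \<Rightarrow> bool) \<Rightarrow> nat \<Rightarrow> nat"
  assumes continuous: "continuous_on (diag ` LD_Fstar) \<Gamma>"
    and struct_iso_iff_E3: "\<And>S S'. S \<in> LD_Fstar \<Longrightarrow> S' \<in> LD_Fstar \<Longrightarrow>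
      struct_iso S S' \<longleftrightarrow> E3 (\<Gamma> (diag S)) (\<Gamma> (diag S'))"
begin

abbreviation chain_column :: "bool \<Rightarrow> nat set \<Rightarrow> nat \<Rightarrow> nat \<Rightarrow> nat" where
  "chain_column b C m \<equiv> column (\<Gamma> (diag (chain_struct b C))) m"

lemma E0_column_if_struct_iso:
  assumes "S \<in> LD_Fstar" and "S' \<in> LD_Fstar" and "struct_iso S S'"
  shows "E0 (column (\<Gamma> (diag S)) m) (column (\<Gamma> (diag S')) m)"
  using struct_iso_iff_E3 assms unfolding E3_def by blast

lemma column_locally_determined:
  assumes "S \<in> LD_Fstar"
  shows "\<exists>N. \<forall>S'\<in>LD_Fstar. (\<forall>x<N. \<forall>y<N. S' x y = S x y) \<longrightarrow>
    column (\<Gamma> (diag S')) m j = column (\<Gamma> (diag S)) m j"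
proof -
  obtain N where N: "\<forall>y\<in>diag ` LD_Fstar. (\<forall>k<N. y k = diag S k) \<longrightarrow>
      \<Gamma> y (prod_encode (m, j)) = \<Gamma> (diag S) (prod_encode (m, j))"
    using continuous_on_coordinate_locally_constant[OF continuous] assms by blast
  show ?thesis
  proof (intro exI ballI impI)
    fix S' assume "S' \<in> LD_Fstar" and "\<forall>x<N. \<forall>y<N. S' x y = S x y"
    then have "diag S' \<in> diag ` LD_Fstar" "\<forall>k<N. diag S' k = diag S k"
      using diag_eq_below by auto
    then show "column (\<Gamma> (diag S')) m j = column (\<Gamma> (diag S)) m j"
      using N unfolding column_def by blast
  qed
qed

text \<open>A long enough finite chain whose column is not \<open>E0\<close>-equivalent to \<open>r\<close> is placed on
  the positions \<open>D \<union> {M..}\<close>; by continuity, a finite part of its diagram already fixes one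
  disagreement with \<open>r\<close>, and the infinite chains extending that part inherit it.\<close>
lemma extension_step:
  assumes bad: "\<forall>n0. \<exists>n\<ge>n0. \<not> E0 (chain_column b {..<n} m) r" and "D \<subseteq> {..<M}"
  shows "\<exists>D' M'. D' \<subseteq> {..<M'} \<and> D' \<inter> {..<M} = D \<and> (\<exists>x\<in>D'. M \<le> x) \<and> (\<exists>x\<in>{M..<M'}. x \<notin> D')
    \<and> (\<exists>j\<ge>J. \<forall>C. C \<inter> {..<M'} = D' \<longrightarrow> infinite C \<longrightarrow> infinite (-C) \<longrightarrow> chain_column b C m j \<noteq> r j)"
proof -
  have "finite D" using assms(2) finite_subset by blast
  obtain n where n: "card D + 2 \<le> n" "\<not> E0 (chain_column b {..<n} m) r"
    using bad by blast
  define T where "T = D \<union> {M..<M + (n - card D)}"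
  have "D \<inter> {M..<M + (n - card D)} = {}" using assms(2) by auto
  then have "finite T" "card T = n"
    using \<open>finite D\<close> n(1) by (simp_all add: T_def card_Un_disjoint)
  then have T_LD: "chain_struct b T \<in> LD_Fstar"
    using n(1) by (intro chain_struct_finite_in_LD_Fstar) auto
  have "E0 (chain_column b T m) (chain_column b {..<n} m)"
    using \<open>finite T\<close> \<open>card T = n\<close> n(1) T_LD
    by (intro E0_column_if_struct_iso struct_iso_chain_struct_finite chain_struct_finite_in_LD_Fstar) auto
  then have "\<not> E0 (chain_column b T m) r" using n(2) E0_sym E0_trans by blast
  then obtain j where j: "J \<le> j" "chain_column b T m j \<noteq> r j" unfolding E0_def by blast
  obtain N where N: "\<forall>S'\<in>LD_Fstar. (\<forall>x<N. \<forall>y<N. S' x y = chain_struct b T x y) \<longrightarrow>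
      column (\<Gamma> (diag S')) m j = chain_column b T m j"
    using column_locally_determined[OF T_LD] by blast
  define M' where "M' = max N (M + (n - card D)) + 1"
  have "\<forall>C. C \<inter> {..<M'} = T \<longrightarrow> infinite C \<longrightarrow> infinite (-C) \<longrightarrow> chain_column b C m j \<noteq> r j"
  proof (intro allI impI)
    fix C assume "C \<inter> {..<M'} = T" "infinite C" "infinite (-C)"
    then have "\<forall>x<N. \<forall>y<N. chain_struct b C x y = chain_struct b T x y"
      unfolding M'_def chain_struct_def by auto
    moreover have "chain_struct b C \<in> LD_Fstar"
      using \<open>infinite C\<close> \<open>infinite (-C)\<close> by (rule chain_struct_infinite_in_LD_Fstar)
    ultimately show "chain_column b C m j \<noteq> r j" using N j(2) by simp
  qed
  moreover have "M + (n - card D) \<le> M' - 1" by (simp add: M'_def)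
  then have "M' - 1 \<in> {M..<M'}" "M' - 1 \<notin> T" using assms(2) by (auto simp: T_def M'_def)
  moreover have "T \<subseteq> {..<M'}" "T \<inter> {..<M} = D" "M \<in> T"
    using assms(2) n(1) by (auto simp: T_def M'_def)
  ultimately show ?thesis using j(1) by blast
qed

lemma finite_chains_eventually_E0:
  assumes "infinite E" and "infinite (-E)"
  shows "\<exists>n0. \<forall>n\<ge>n0. E0 (chain_column b {..<n} m) (chain_column b E m)"
proof (rule ccontr)
  assume "\<not> ?thesis"
  then have "\<forall>n0. \<exists>n\<ge>n0. \<not> E0 (chain_column b {..<n} m) (chain_column b E m)" by blast
  then obtain C where C: "infinite C" "infinite (-C)"
    and "\<forall>J. \<exists>j\<ge>J. chain_column b C m j \<noteq> chain_column b E m j"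
    using infinite_coinfinite_set_by_extension[OF extension_step] by blast
  then have "\<not> E0 (chain_column b C m) (chain_column b E m)" unfolding E0_def by blast
  moreover have "E0 (chain_column b C m) (chain_column b E m)"
    using C assms
    by (intro E0_column_if_struct_iso struct_iso_chain_struct_infinite chain_struct_infinite_in_LD_Fstar)
  ultimately show False by contradiction
qed

end

theorem mainTheorem18:
  shows "\<not> E3_learnable LD_Fstar"
proof
  assume "E3_learnable LD_Fstar"
  then obtain \<Gamma> where "E3_learner \<Gamma>"
    unfolding E3_learnable_def E3_learner_def by blast
  then interpret E3_learner \<Gamma> .
  define E where "E = {x :: nat. even x}"
  have E: "infinite E" "infinite (-E)"
    unfolding E_def infinite_nat_iff_unbounded_le by (simp_all, presburger+)
  obtain m where m: "\<not> E0 (chain_column True E m) (chain_column False E m)"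
    using struct_iso_iff_E3 not_struct_iso_chain_struct_up_down chain_struct_infinite_in_LD_Fstar E
    unfolding E3_def by blast
  obtain n1 n2 where "\<forall>n\<ge>n1. E0 (chain_column True {..<n} m) (chain_column True E m)"
    and "\<forall>n\<ge>n2. E0 (chain_column False {..<n} m) (chain_column False E m)"
    using finite_chains_eventually_E0[OF E] by meson
  moreover define n where "n = max 2 (max n1 n2)"
  ultimately have n: "2 \<le> n" "E0 (chain_column True {..<n} m) (chain_column True E m)"
    "E0 (chain_column False {..<n} m) (chain_column False E m)"
    by simp_all
  have "E0 (chain_column True {..<n} m) (chain_column False {..<n} m)"
    using n(1) by (intro E0_column_if_struct_iso struct_iso_chain_struct_finite chain_struct_finite_in_LD_Fstar) auto
  then show False
    using m n(2,3) E0_sym E0_trans by blast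
qed

end
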